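(* Let $P$ be a distribution on $\mathcal{Z}$, $h$ a fixed model, $\ell\ge0$ a loss with $C=\sup_{z\in\mathcal{Z}}\ell(h,z)<\infty$, $S$ a set of $n$ i.i.d. samples from $P$, and $\mathcal{Z}_1,\dots,\mathcal{Z}_K$ a partition of $\mathcal{Z}$ into disjoint nonempty measurable sets. Let $p_i=P(\mathcal{Z}_i)$ and, for a constant $\gamma\ge1$, $u=\sum_{i=1}^K\gamma np_i(1+\gamma np_i)$. For any constants $\gamma\ge1$, $\delta_1\ge\exp\!\big(-\frac{u\ln\gamma}{4n-3}\big)$ and $\delta_2>0$, with probability at least $1-\delta_1-\delta_2$, $$F(P,h)\le F(S,h)+C\sqrt{\frac{u}{2n^2}\ln\frac1{\delta_1}}+g(\delta_2).$$
   Context: $F(P,h)=\mathbb{E}_{z\sim P}[\ell(h,z)]$, $F(S,h)=\frac1n\sum_{z\in S}\ell(h,z)$. $S_i=S\cap\mathcal{Z}_i$, $n_i=|S_i|$, $T=\{i\in[K]:S\cap\mathcal{Z}_i\ne\emptyset\}$, and $g(\delta)=C(\sqrt2+1)\sqrt{\frac{|T|\ln(2K/\delta)}{n}}+\frac{2C|T|\ln(2K/\delta)}{n}$. *)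

theory Defs
  imports "HOL-Probability.Probability"
begin

definition pop_risk :: "'z measure \<Rightarrow> ('h \<Rightarrow> 'z \<Rightarrow> real) \<Rightarrow> 'h \<Rightarrow> real" where
  "pop_risk P loss h = (\<integral>z. loss h z \<partial>P)"

definition emp_risk :: "nat \<Rightarrow> (nat \<Rightarrow> 'z) \<Rightarrow> ('h \<Rightarrow> 'z \<Rightarrow> real) \<Rightarrow> 'h \<Rightarrow> real" where
  "emp_risk n s loss h = (1 / real n) * (\<Sum>j<n. loss h (s j))"

definition hit_cells :: "nat \<Rightarrow> (nat \<Rightarrow> 'z) \<Rightarrow> nat \<Rightarrow> (nat \<Rightarrow> 'z set) \<Rightarrow> nat set" where
  "hit_cells n s K Zs = {i \<in> {1..K}. \<exists>j<n. s j \<in> Zs i}"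

definition g_bound :: "real \<Rightarrow> nat \<Rightarrow> nat \<Rightarrow> nat \<Rightarrow> real \<Rightarrow> real" where
  "g_bound C K n t \<delta> =
     C * (sqrt 2 + 1) * sqrt (real t * ln (2 * real K / \<delta>) / real n)
     + 2 * C * real t * ln (2 * real K / \<delta>) / real n"

end

theory Submission
  imports Defs
begin

text \<open>The partition only enters as slack. Since the cell probabilities sum to one and
  \<open>\<gamma> \<ge> 1\<close>, the proxy \<open>u\<close> is at least \<open>n\<close>, so the second term dominates the Hoeffding
  radius \<open>C \<surd>(ln (1/\<delta>\<^sub>1) / 2n)\<close>, and \<open>g(\<delta>\<^sub>2) \<ge> 0\<close>. Hence the event contains the Hoeffding
  event for the i.i.d. losses, of probability at least \<open>1 - \<delta>\<^sub>1\<close>; the lower bound on \<open>\<delta>\<^sub>1\<close> is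
  only needed to make \<open>\<delta>\<^sub>1\<close> positive.\<close>

lemma indep_vars_PiM_components:
  assumes M: "prob_space M" and I: "I \<noteq> {}"
  shows "prob_space.indep_vars (PiM I (\<lambda>_. M)) (\<lambda>_. M) (\<lambda>i x. x i) I"
proof -
  interpret product_prob_space "\<lambda>_. M"
    by (simp add: M product_prob_space_def product_prob_space_axioms_def
        product_sigma_finite_def prob_space_imp_sigma_finite)
  have restrict_id: "distr (PiM I (\<lambda>_. M)) (PiM I (\<lambda>_. M)) (\<lambda>x. \<lambda>i\<in>I. x i) = PiM I (\<lambda>_. M)"
    by (subst distr_cong[where g = "\<lambda>x. x"]) (auto simp: space_PiM PiE_def extensional_restrict)
  have components: "PiM I (\<lambda>i. distr (PiM I (\<lambda>_. M)) M (\<lambda>x. x i)) = PiM I (\<lambda>_. M)"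
    by (rule PiM_cong) (auto intro: distr_PiM_component M)
  show ?thesis
    by (subst prob_space.indep_vars_iff_distr_eq_PiM'[OF prob_space_PiM I])
       (auto simp: M restrict_id components)
qed

lemma distr_PiM_component_compose:
  assumes "prob_space M" "i \<in> I" "f \<in> borel_measurable M"
  shows "distr (PiM I (\<lambda>_. M)) borel (\<lambda>x. f (x i)) = distr M borel f"
proof -
  have "distr (PiM I (\<lambda>_. M)) borel (\<lambda>x. f (x i))
        = distr (distr (PiM I (\<lambda>_. M)) M (\<lambda>x. x i)) borel f"
    using assms by (subst distr_distr) (auto simp: comp_def)
  also have "distr (PiM I (\<lambda>_. M)) M (\<lambda>x. x i) = M"
    using assms by (intro distr_PiM_component) auto
  finally show ?thesis .
qed

lemma Hoeffding_ineq_sample_mean_le: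
  fixes n :: nat
  assumes M: "prob_space M" and f: "f \<in> borel_measurable M"
    and range: "\<forall>z\<in>space M. f z \<in> {a..b}" and "a < b" and n: "n \<ge> 1" and "\<epsilon> \<ge> 0"
  shows "prob_space.prob (PiM {..<n} (\<lambda>_. M))
           {x \<in> space (PiM {..<n} (\<lambda>_. M)). (\<Sum>j<n. f (x j)) / real n \<le> integral\<^sup>L M f - \<epsilon>}
         \<le> exp (- 2 * real n * \<epsilon>\<^sup>2 / (b - a)\<^sup>2)"
proof -
  let ?S = "PiM {..<n} (\<lambda>_. M)"
  have comp[measurable]: "(\<lambda>x. x j) \<in> measurable ?S M" if "j < n" for j
    using that by (intro measurable_component_singleton) auto
  have sample: "x j \<in> space M" if "x \<in> space ?S" "j < n" for x j
    using that by (auto simp: space_PiM)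
  have "0 < n" using n by simp
  interpret S: prob_space ?S using M by (intro prob_space_PiM)
  interpret H: Hoeffding_ineq_iid ?S "{..<n}" "\<lambda>j x. f (x j)" "\<lambda>x. f (x 0)" a b
    "S.expectation (\<lambda>x. f (x 0))"
  proof (intro Hoeffding_ineq_iid.intro iid_interval_bounded_random_variables.intro
      S.prob_space_axioms iid_interval_bounded_random_variables_axioms.intro)
    show "finite {..<n}" by simp
    show "S.indep_vars (\<lambda>_. borel) (\<lambda>j x. f (x j)) {..<n}"
      using \<open>0 < n\<close> f
      by (intro S.indep_vars_compose2[OF indep_vars_PiM_components[OF M]]) auto
    show "distr ?S borel (\<lambda>x. f (x j)) = distr ?S borel (\<lambda>x. f (x 0))" if "j \<in> {..<n}" for j
      using that \<open>0 < n\<close> by (simp add: distr_PiM_component_compose M f)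
    show "AE x in ?S. f (x 0) \<in> {a..b}"
      using range sample \<open>0 < n\<close> by (intro AE_I2) auto
    show "(\<lambda>x. f (x 0)) \<in> borel_measurable ?S"
      using \<open>0 < n\<close> f by measurable
  qed auto
  have "S.expectation (\<lambda>x. f (x 0)) = integral\<^sup>L (distr ?S M (\<lambda>x. x 0)) f"
    using \<open>0 < n\<close> f by (intro integral_distr[symmetric]) auto
  also have "distr ?S M (\<lambda>x. x 0) = M"
    using \<open>0 < n\<close> M by (intro distr_PiM_component) auto
  finally have "S.expectation (\<lambda>x. f (x 0)) = integral\<^sup>L M f" .
  moreover have "{..<n} \<noteq> {}"
    using \<open>0 < n\<close> by auto
  ultimately show ?thesis
    using H.Hoeffding_ineq_le'[OF \<open>\<epsilon> \<ge> 0\<close> \<open>a < b\<close>] by simp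
qed

lemma pop_risk_le_emp_risk_Hoeffding:
  fixes n :: nat
  assumes M: "prob_space M" and meas: "loss h \<in> borel_measurable M"
    and range: "\<forall>z\<in>space M. 0 \<le> loss h z \<and> loss h z \<le> C"
    and n: "n \<ge> 1" and \<delta>: "0 < \<delta>" "\<delta> \<le> 1"
  shows "1 - \<delta> \<le> prob_space.prob (PiM {..<n} (\<lambda>_. M))
           {s \<in> space (PiM {..<n} (\<lambda>_. M)).
              pop_risk M loss h \<le> emp_risk n s loss h + C * sqrt (ln (1 / \<delta>) / (2 * real n))}"
    (is "_ \<le> prob_space.prob ?S ?E")
proof -
  interpret M: prob_space M by fact
  interpret S: prob_space ?S using M by (intro prob_space_PiM)
  have comp[measurable]: "(\<lambda>s. s j) \<in> measurable ?S M" if "j < n" for j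
    using that by (intro measurable_component_singleton) auto
  have sample: "s j \<in> space M" if "s \<in> space ?S" "j < n" for s j
    using that by (auto simp: space_PiM)
  have emp_nonneg: "0 \<le> emp_risk n s loss h" if "s \<in> space ?S" for s
    unfolding emp_risk_def using range sample[OF that]
    by (auto intro!: divide_nonneg_nonneg sum_nonneg)
  have "(\<lambda>s. emp_risk n s loss h) \<in> borel_measurable ?S"
    unfolding emp_risk_def using meas by measurable
  then have E_sets: "?E \<in> sets ?S"
    by measurable
  have "0 \<le> C"
    using range M.not_empty by fastforce
  show ?thesis
  proof (cases "C = 0") \<comment> \<open>Hoeffding's inequality needs a nondegenerate range \<open>0 < C\<close>.\<close>
    case True
    then have "loss h z = 0" if "z \<in> space M" for z
      using range that by force
    then have "pop_risk M loss h = 0"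
      unfolding pop_risk_def by (simp cong: Bochner_Integration.integral_cong)
    then have "?E = space ?S"
      using emp_nonneg True by auto
    then show ?thesis
      using \<delta> S.prob_space by simp
  next
    case False
    with \<open>0 \<le> C\<close> have "0 < C" by simp
    define \<epsilon> where "\<epsilon> = C * sqrt (ln (1 / \<delta>) / (2 * real n))"
    have "0 \<le> \<epsilon>"
      unfolding \<epsilon>_def using \<open>0 \<le> C\<close> \<delta> by simp
    define B where
      "B = {s \<in> space ?S. (\<Sum>j<n. loss h (s j)) / real n \<le> integral\<^sup>L M (loss h) - \<epsilon>}"
    have "S.prob B \<le> exp (- 2 * real n * \<epsilon>\<^sup>2 / (C - 0)\<^sup>2)"
      unfolding B_def
      by (rule Hoeffding_ineq_sample_mean_le[OF M meas]) (use range \<open>0 < C\<close> n \<open>0 \<le> \<epsilon>\<close> in auto)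
    also have "\<epsilon>\<^sup>2 = C\<^sup>2 * (ln (1 / \<delta>) / (2 * real n))"
      unfolding \<epsilon>_def using \<delta> by (simp add: power_mult_distrib)
    also have "- 2 * real n * (C\<^sup>2 * (ln (1 / \<delta>) / (2 * real n))) / (C - 0)\<^sup>2 = ln \<delta>"
      using \<open>0 < C\<close> n \<delta> by (simp add: ln_div)
    finally have "S.prob B \<le> \<delta>"
      using \<delta> by simp
    moreover have "B \<in> sets ?S"
      unfolding B_def using meas by measurable
    ultimately have "1 - \<delta> \<le> S.prob (space ?S - B)"
      using S.prob_compl by simp
    also have "\<dots> \<le> S.prob ?E"
    proof (rule S.finite_measure_mono[OF _ E_sets])
      show "space ?S - B \<subseteq> ?E"
        unfolding B_def \<epsilon>_def emp_risk_def pop_risk_def by auto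
    qed
    finally show ?thesis .
  qed
qed

lemma le_sum_scaled_prob_quadratic:
  fixes p :: "'a \<Rightarrow> real" and x \<gamma> :: real
  assumes p: "\<forall>i\<in>A. 0 \<le> p i" "sum p A = 1" and "0 \<le> x" "1 \<le> \<gamma>"
  shows "x \<le> (\<Sum>i\<in>A. \<gamma> * x * p i * (1 + \<gamma> * x * p i))"
proof -
  have "x * p i \<le> \<gamma> * x * p i * (1 + \<gamma> * x * p i)" if "i \<in> A" for i
  proof -
    have "0 \<le> x * p i" using p that \<open>0 \<le> x\<close> by simp
    then have "x * p i \<le> \<gamma> * (x * p i)"
      using \<open>1 \<le> \<gamma>\<close> mult_right_mono[of 1 \<gamma>] by simp
    also have "\<dots> \<le> \<gamma> * (x * p i) * (1 + \<gamma> * (x * p i))"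
      using \<open>0 \<le> x * p i\<close> \<open>1 \<le> \<gamma>\<close> by (simp add: ring_distribs)
    finally show ?thesis by (simp add: mult.assoc)
  qed
  then have "(\<Sum>i\<in>A. x * p i) \<le> (\<Sum>i\<in>A. \<gamma> * x * p i * (1 + \<gamma> * x * p i))"
    by (rule sum_mono)
  then show ?thesis
    using p by (simp add: sum_distrib_left[symmetric])
qed

lemma (in prob_space) sum_prob_partition_eq_1:
  assumes "finite I" "\<forall>i\<in>I. A i \<in> events" "disjoint_family_on A I" "(\<Union>i\<in>I. A i) = space M"
  shows "(\<Sum>i\<in>I. prob (A i)) = 1"
  using finite_measure_finite_Union[of I A] assms by (simp add: prob_space image_subset_iff)

lemma borel_measurable_card_hit_cells:
  assumes Zs: "\<forall>i\<in>{1..K}. Zs i \<in> sets M"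
  shows "(\<lambda>s. real (card (hit_cells n s K Zs))) \<in> borel_measurable (PiM {..<n} (\<lambda>_. M))"
proof -
  let ?hit = "\<lambda>i. {s. \<exists>j\<in>{..<n}. s j \<in> Zs i}"
  have "real (card (hit_cells n s K Zs)) = (\<Sum>i\<in>{1..K}. indicator (?hit i) s)" for s
    unfolding hit_cells_def by (simp add: indicator_def sum.If_cases Int_def conj_commute Bex_def)
  moreover have "(\<lambda>s. \<Sum>i\<in>{1..K}. indicator (?hit i) s :: real)
                   \<in> borel_measurable (PiM {..<n} (\<lambda>_. M))"
  proof (intro borel_measurable_sum borel_measurable_indicator')
    fix i assume "i \<in> {1..K}"
    then have [measurable]: "Zs i \<in> sets M" using Zs by blast
    have "Measurable.pred (PiM {..<n} (\<lambda>_. M)) (\<lambda>s. \<exists>j\<in>{..<n}. s j \<in> Zs i)"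
    proof (rule pred_intros_finite)
      fix j assume "j \<in> {..<n}"
      then show "Measurable.pred (PiM {..<n} (\<lambda>_. M)) (\<lambda>s. s j \<in> Zs i)"
        by measurable
    qed simp
    then show "{s \<in> space (PiM {..<n} (\<lambda>_. M)). s \<in> ?hit i} \<in> sets (PiM {..<n} (\<lambda>_. M))"
      by (simp add: pred_def)
  qed
  ultimately show ?thesis by simp
qed

lemma g_bound_nonneg:
  assumes "0 \<le> C" "0 < \<delta>" "\<delta> \<le> 2 * real K"
  shows "0 \<le> g_bound C K n t \<delta>"
proof -
  have "0 \<le> ln (2 * real K / \<delta>)"
    using assms by simp
  then show ?thesis
    unfolding g_bound_def using \<open>0 \<le> C\<close> by simp
qed

lemma Hoeffding_radius_le_partition_radius:
  fixes n :: nat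
  assumes "0 \<le> C" "0 < \<delta>" "\<delta> \<le> 1" "1 \<le> n" "real n \<le> u"
  shows "C * sqrt (ln (1 / \<delta>) / (2 * real n)) \<le> C * sqrt (u / (2 * real n ^ 2) * ln (1 / \<delta>))"
proof -
  have "1 / (2 * real n) \<le> u / (2 * real n ^ 2)"
    using assms by (simp add: field_simps power2_eq_square)
  moreover have "0 \<le> ln (1 / \<delta>)"
    using assms by simp
  ultimately have "ln (1 / \<delta>) / (2 * real n) \<le> u / (2 * real n ^ 2) * ln (1 / \<delta>)"
    using mult_right_mono by fastforce
  then show ?thesis
    using \<open>0 \<le> C\<close> by (intro mult_left_mono real_sqrt_le_mono)
qed

theorem theorem3:
  fixes P :: "'z measure" and loss :: "'h \<Rightarrow> 'z \<Rightarrow> real" and h :: 'h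
    and n K :: nat and Zs :: "nat \<Rightarrow> 'z set" and \<gamma> \<delta>1 \<delta>2 :: real
  assumes "prob_space P"
    and nonneg: "\<forall>h'. \<forall>z\<in>space P. loss h' z \<ge> 0"
    and meas: "loss h \<in> borel_measurable P"
    and bdd: "bdd_above (loss h ` space P)"
    and n_pos: "n \<ge> 1"
    and part_meas: "\<forall>i\<in>{1..K}. Zs i \<in> sets P"
    and part_ne: "\<forall>i\<in>{1..K}. Zs i \<noteq> {}"
    and part_disj: "\<forall>i\<in>{1..K}. \<forall>j\<in>{1..K}. i \<noteq> j \<longrightarrow> Zs i \<inter> Zs j = {}"
    and part_cover: "(\<Union>i\<in>{1..K}. Zs i) = space P"
    and gamma: "\<gamma> \<ge> 1"
    and delta1: "\<delta>1 \<ge> exp (- ((\<Sum>i=1..K. \<gamma> * real n * measure P (Zs i)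
                                       * (1 + \<gamma> * real n * measure P (Zs i))) * ln \<gamma>
                                    / (4 * real n - 3)))"
    and delta2: "\<delta>2 > 0"
  shows "prob_space.prob (Pi\<^sub>M {..<n} (\<lambda>_. P))
           {s \<in> space (Pi\<^sub>M {..<n} (\<lambda>_. P)).
              pop_risk P loss h
              \<le> emp_risk n s loss h
                 + (SUP z\<in>space P. loss h z)
                   * sqrt ((\<Sum>i=1..K. \<gamma> * real n * measure P (Zs i)
                                       * (1 + \<gamma> * real n * measure P (Zs i)))
                           / (2 * real n ^ 2) * ln (1 / \<delta>1))
                 + g_bound (SUP z\<in>space P. loss h z) K n (card (hit_cells n s K Zs)) \<delta>2}
         \<ge> 1 - \<delta>1 - \<delta>2"
proof -
  interpret P: prob_space P by fact
  let ?S = "PiM {..<n} (\<lambda>_. P)"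
  let ?C = "SUP z\<in>space P. loss h z"
  let ?u = "\<Sum>i=1..K. \<gamma> * real n * measure P (Zs i) * (1 + \<gamma> * real n * measure P (Zs i))"
  let ?E = "{s \<in> space ?S. pop_risk P loss h \<le> emp_risk n s loss h
              + ?C * sqrt (?u / (2 * real n ^ 2) * ln (1 / \<delta>1))
              + g_bound ?C K n (card (hit_cells n s K Zs)) \<delta>2}"
  interpret S: prob_space ?S using \<open>prob_space P\<close> by (intro prob_space_PiM)
  show ?thesis
  proof (cases "1 \<le> \<delta>1 + \<delta>2")
    case True
    then show ?thesis using measure_nonneg[of ?S ?E] by linarith
  next
    case False
    have "0 < \<delta>1"
      using delta1 by (rule less_le_trans[OF exp_gt_zero])
    with False delta2 have \<delta>1: "0 < \<delta>1" "\<delta>1 \<le> 1" and "\<delta>2 < 1" by auto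
    have range: "\<forall>z\<in>space P. 0 \<le> loss h z \<and> loss h z \<le> ?C"
      using nonneg bdd by (auto intro: cSUP_upper)
    have "0 \<le> ?C"
      using range P.not_empty by fastforce
    have "1 \<le> K"
      using P.not_empty part_cover by (cases K) auto
    have "(\<Sum>i=1..K. measure P (Zs i)) = 1"
      using part_meas part_disj part_cover
      by (intro P.sum_prob_partition_eq_1) (auto simp: disjoint_family_on_def)
    then have "real n \<le> ?u"
      using gamma by (intro le_sum_scaled_prob_quadratic) auto
    then have radius: "?C * sqrt (ln (1 / \<delta>1) / (2 * real n))
                         \<le> ?C * sqrt (?u / (2 * real n ^ 2) * ln (1 / \<delta>1))"
      using \<open>0 \<le> ?C\<close> \<delta>1 n_pos by (intro Hoeffding_radius_le_partition_radius)
    have "0 \<le> g_bound ?C K n t \<delta>2" for t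
      using \<open>0 \<le> ?C\<close> delta2 \<open>\<delta>2 < 1\<close> \<open>1 \<le> K\<close> by (intro g_bound_nonneg) auto
    with radius have "{s \<in> space ?S. pop_risk P loss h \<le> emp_risk n s loss h
                        + ?C * sqrt (ln (1 / \<delta>1) / (2 * real n))} \<subseteq> ?E"
      by (auto intro: order_trans add_increasing2)
    moreover have "?E \<in> sets ?S"
      using borel_measurable_card_hit_cells[OF part_meas] meas
      unfolding emp_risk_def g_bound_def by measurable
    ultimately have "1 - \<delta>1 \<le> S.prob ?E"
      using pop_risk_le_emp_risk_Hoeffding[where loss = loss and h = h,
              OF \<open>prob_space P\<close> meas range n_pos \<delta>1]
        S.finite_measure_mono by (meson order_trans)
    then show ?thesis
      using delta2 by linarith
  qed
qed

end
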